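(* Let $G$ be a group with identity $e$, $A$ a finite set with $|A|\ge2$, $S\subseteq G$ finite with $e\in S$, and suppose $(\mathcal P,f)$ generates a local map $\mu:A^S\to A$. Let $s\in S\setminus\{e\}$. (1) If there exist $p\in\mathcal P$ and $z\in\mathcal P^c$ with $\mathrm{Res}_s(p)=\mathrm{Res}_s(z)$, then $s$ is essential for $\mu$. (2) If $s$ is essential for $\mu$ and $f$ is well-behaved, then there exist $p\in\mathcal P$ and $z\in\mathcal P^c$ with $\mathrm{Res}_s(p)=\mathrm{Res}_s(z)$.
   Context: $A^S$ is the set of functions $S\to A$. For $s\in S$, $\mathrm{Res}_s:A^S\to A^{S\setminus\{s\}}$ is $\mathrm{Res}_s(z)=z|_{S\setminus\{s\}}$. An element $s\in S$ is essential for $\mu$ if there exist $z,w\in A^S$ with $\mathrm{Res}_s(z)=\mathrm{Res}_s(w)$ but $\mu(z)\neq\mu(w)$. The pair $(\mathcal P,f)$ generates $\mu$ if $\mathcal P=\{z\in A^S:\mu(z)\neq z(e)\}$ and $f:\mathcal P\to A$ is the restriction of $\mu$ to $\mathcal P$; $\mathcal P^c=A^S\setminus\mathcal P$. The function $f$ is well-behaved if for all $p,q\in\mathcal P$: $p(e)=q(e)$ if and only if $f(p)=f(q)$. *)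

theory Defs
  imports "HOL-Algebra.Group" "HOL-Library.FuncSet"
begin

(* Configurations A^S are the extensional functions S ->_E A. *)

definition Res :: "'g set \<Rightarrow> 'g \<Rightarrow> ('g \<Rightarrow> 'a) \<Rightarrow> ('g \<Rightarrow> 'a)" where
  "Res S s z = restrict z (S - {s})"

definition essential :: "'g set \<Rightarrow> 'a set \<Rightarrow> (('g \<Rightarrow> 'a) \<Rightarrow> 'a) \<Rightarrow> 'g \<Rightarrow> bool" where
  "essential S A \<mu> s \<longleftrightarrow>
     (\<exists>z \<in> S \<rightarrow>\<^sub>E A. \<exists>w \<in> S \<rightarrow>\<^sub>E A. Res S s z = Res S s w \<and> \<mu> z \<noteq> \<mu> w)"

definition generates :: "'g set \<Rightarrow> 'a set \<Rightarrow> 'g \<Rightarrow> ('g \<Rightarrow> 'a) set \<Rightarrow> (('g \<Rightarrow> 'a) \<Rightarrow> 'a)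
    \<Rightarrow> (('g \<Rightarrow> 'a) \<Rightarrow> 'a) \<Rightarrow> bool" where
  "generates S A e P f \<mu> \<longleftrightarrow>
     P = {z \<in> S \<rightarrow>\<^sub>E A. \<mu> z \<noteq> z e} \<and> (\<forall>p \<in> P. f p = \<mu> p)"

definition well_behaved :: "'g \<Rightarrow> ('g \<Rightarrow> 'a) set \<Rightarrow> (('g \<Rightarrow> 'a) \<Rightarrow> 'a) \<Rightarrow> bool" where
  "well_behaved e P f \<longleftrightarrow> (\<forall>p \<in> P. \<forall>q \<in> P. p e = q e \<longleftrightarrow> f p = f q)"

end

theory Submission
  imports Defs
begin

(* Configurations that agree off s agree at the centre e \<noteq> s. Outside P the local map
   copies the centre value, and a well-behaved f is determined on P by the centre value.
   Hence two configurations agreeing off s can only have different images if exactly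
   one of them lies in P. *)

lemma Res_eq_imp_eq_at:
  assumes "Res S s z = Res S s w" and "t \<in> S" and "t \<noteq> s"
  shows "z t = w t"
  using assms unfolding Res_def by (metis Diff_iff restrict_apply' singletonD)

lemma generates_in_P_iff:
  assumes "generates S A e P f \<mu>" and "z \<in> S \<rightarrow>\<^sub>E A"
  shows "z \<in> P \<longleftrightarrow> \<mu> z \<noteq> z e"
  using assms unfolding generates_def by blast

lemma essential_if_Res_eq_across_P:
  assumes gen: "generates S A e P f \<mu>" and "e \<in> S" and "e \<noteq> s"
    and p: "p \<in> P" and z: "z \<in> (S \<rightarrow>\<^sub>E A) - P" and Res_eq: "Res S s p = Res S s z"
  shows "essential S A \<mu> s"
proof -
  have p_conf: "p \<in> S \<rightarrow>\<^sub>E A" using gen p unfolding generates_def by blast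
  have "\<mu> p \<noteq> p e" using generates_in_P_iff[OF gen p_conf] p by blast
  also have "p e = z e" using Res_eq_imp_eq_at[OF Res_eq \<open>e \<in> S\<close> \<open>e \<noteq> s\<close>] .
  also have "z e = \<mu> z" using generates_in_P_iff[OF gen] z by auto
  finally show ?thesis
    unfolding essential_def using p_conf z Res_eq by blast
qed

lemma Res_eq_across_P_if_essential:
  assumes gen: "generates S A e P f \<mu>" and wb: "well_behaved e P f"
    and "e \<in> S" and "e \<noteq> s" and "essential S A \<mu> s"
  shows "\<exists>p \<in> P. \<exists>z \<in> (S \<rightarrow>\<^sub>E A) - P. Res S s p = Res S s z"
proof -
  obtain z w where z: "z \<in> S \<rightarrow>\<^sub>E A" and w: "w \<in> S \<rightarrow>\<^sub>E A"
    and Res_eq: "Res S s z = Res S s w" and images_differ: "\<mu> z \<noteq> \<mu> w"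
    using \<open>essential S A \<mu> s\<close> unfolding essential_def by blast
  have centre_eq: "z e = w e" using Res_eq_imp_eq_at[OF Res_eq \<open>e \<in> S\<close> \<open>e \<noteq> s\<close>] .
  have "\<not> (z \<in> P \<and> w \<in> P)"
  proof
    assume "z \<in> P \<and> w \<in> P"
    then have "\<mu> z = \<mu> w"
      using gen wb centre_eq unfolding generates_def well_behaved_def by metis
    with images_differ show False by contradiction
  qed
  moreover have "\<not> (z \<notin> P \<and> w \<notin> P)"
  proof
    assume "z \<notin> P \<and> w \<notin> P"
    then have "\<mu> z = \<mu> w"
      using generates_in_P_iff[OF gen z] generates_in_P_iff[OF gen w] centre_eq by simp
    with images_differ show False by contradiction
  qed
  ultimately consider "z \<in> P" "w \<in> (S \<rightarrow>\<^sub>E A) - P" | "w \<in> P" "z \<in> (S \<rightarrow>\<^sub>E A) - P"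
    using z w by blast
  then show ?thesis
  proof cases
    case 1
    then show ?thesis using Res_eq by blast
  next
    case 2
    then show ?thesis using Res_eq[symmetric] by blast
  qed
qed

theorem mainTheorem2:
  fixes G :: "('g, 'b) monoid_scheme" and A :: "'a set" and S :: "'g set"
    and \<mu> :: "('g \<Rightarrow> 'a) \<Rightarrow> 'a" and P :: "('g \<Rightarrow> 'a) set" and f :: "('g \<Rightarrow> 'a) \<Rightarrow> 'a"
    and s :: 'g
  assumes "group G"
    and "finite A" and "card A \<ge> 2"
    and "S \<subseteq> carrier G" and "finite S" and "\<one>\<^bsub>G\<^esub> \<in> S"
    and "\<mu> \<in> (S \<rightarrow>\<^sub>E A) \<rightarrow> A"
    and "generates S A \<one>\<^bsub>G\<^esub> P f \<mu>"
    and "s \<in> S - {\<one>\<^bsub>G\<^esub>}"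
  shows "((\<exists>p \<in> P. \<exists>z \<in> (S \<rightarrow>\<^sub>E A) - P. Res S s p = Res S s z) \<longrightarrow> essential S A \<mu> s)
       \<and> ((essential S A \<mu> s \<and> well_behaved \<one>\<^bsub>G\<^esub> P f)
            \<longrightarrow> (\<exists>p \<in> P. \<exists>z \<in> (S \<rightarrow>\<^sub>E A) - P. Res S s p = Res S s z))"
proof -
  have "\<one>\<^bsub>G\<^esub> \<noteq> s" using \<open>s \<in> S - {\<one>\<^bsub>G\<^esub>}\<close> by blast
  then show ?thesis
    using essential_if_Res_eq_across_P[OF \<open>generates S A \<one>\<^bsub>G\<^esub> P f \<mu>\<close> \<open>\<one>\<^bsub>G\<^esub> \<in> S\<close>]
      Res_eq_across_P_if_essential[OF \<open>generates S A \<one>\<^bsub>G\<^esub> P f \<mu>\<close> _ \<open>\<one>\<^bsub>G\<^esub> \<in> S\<close>]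
    by blast
qed

end
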